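(* Consider two agents with combination matrix $A=\begin{bmatrix}a&1-a\\1-a&a\end{bmatrix}$, $a\in(0,1)$, $P=0.5I_2$, $\overline{A}=(I_2+A)/2$, $V=U\Sigma^{1/2}U^{\mathsf{T}}$ where $(P-AP)/2=U\Sigma U^{\mathsf{T}}$ is an eigendecomposition, and $\mathcal{V}=V\otimes I_M$. Each agent has quadratic cost $\frac12(w^{\mathsf{T}}R_{u,k}w-2r_{du,k}^{\mathsf{T}}w)$ with $R_{u,1}=R_{u,2}=\sigma^2I_M$, and both run EXTRA with step-size $\mu^e$, initialized with $\mathcal{Y}^e_0=\mathcal{V}\mathcal{W}^e_0$. The stacked error $\widetilde{z}^e_i=[\widetilde{\mathcal{W}}^e_i;\widetilde{\mathcal{Y}}^e_i]$ then evolves as $\widetilde{z}^e_i=(Q_e\otimes I_M)\widetilde{z}^e_{i-1}$ with $Q_e=\begin{bmatrix}\overline{A}-\mu^e\sigma^2I_2 & -2V\\ V(\overline{A}-\mu^e\sigma^2I_2) & \overline{A}\end{bmatrix}$. If $\mu^e$ is chosen such that $\mu^e\sigma^2\ge a+1$, then $\widetilde{z}^e_i$ generated by EXTRA diverges.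
   Context: Contrasts with exact diffusion in the same two-agent setting, which is stable for $0<\mu\sigma^2<2$; since $1+a<2$, exact diffusion has a larger stability range. *)

theory Defs
  imports "HOL-Analysis.Analysis"
begin

definition combA :: "real \<Rightarrow> real^2^2" where
  "combA a = (\<chi> k l. if k = l then a else 1 - a)"

definition Pmat :: "real^2^2" where
  "Pmat = (1/2::real) *\<^sub>R mat 1"

definition Abar :: "real \<Rightarrow> real^2^2" where
  "Abar a = (1/2::real) *\<^sub>R (mat 1 + combA a)"

text \<open>Action of the Kronecker product B \<otimes> I_M on a stacked vector of two M-blocks.\<close>
definition kapp :: "real^2^2 \<Rightarrow> real^'m^2 \<Rightarrow> real^'m^2" where
  "kapp B X = (\<chi> k. \<Sum>j\<in>UNIV. B $ k $ j *\<^sub>R X $ j)"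

definition Qe_step :: "real \<Rightarrow> real \<Rightarrow> real \<Rightarrow> real^2^2 \<Rightarrow>
    ((real^'m^2) \<times> (real^'m^2)) \<Rightarrow> ((real^'m^2) \<times> (real^'m^2))" where
  "Qe_step a \<mu> \<sigma> V z =
     (let B = Abar a - (\<mu> * \<sigma>^2) *\<^sub>R mat 1
      in (kapp B (fst z) + kapp ((-2::real) *\<^sub>R V) (snd z),
          kapp (V ** B) (fst z) + kapp (Abar a) (snd z)))"

definition extra_err :: "real \<Rightarrow> real \<Rightarrow> real \<Rightarrow> real^2^2 \<Rightarrow>
    ((real^'m^2) \<times> (real^'m^2)) \<Rightarrow> nat \<Rightarrow> ((real^'m^2) \<times> (real^'m^2))" where
  "extra_err a \<mu> \<sigma> V z0 i = (Qe_step a \<mu> \<sigma> V ^^ i) z0"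

end

theory Submission
  imports Defs
begin

text \<open>V is a symmetric square root of (P - AP)/2 = (1 - a)/4 [1, -1; -1, 1], hence
  V = p [1, -1; -1, 1] with 8 p^2 = 1 - a. Antipodal vectors (x, -x) are therefore eigenvectors of
  A, Abar and V simultaneously, and on pairs of them EXTRA acts through the 2x2 matrix
  [a - m, -4p; 2p(a - m), a] with m = mu sigma^2. Its characteristic polynomial
  t^2 - (2a - m) t + (a - m) is negative at t = -1 when m \<ge> a + 1, so it has an eigenvalue
  l < -1, and the iterates from a corresponding eigenvector are l^i z0.\<close>

lemma monic_quadratic_root_below:
  fixes \<beta> \<gamma> t :: real
  assumes "t\<^sup>2 + \<beta> * t + \<gamma> < 0"
  shows "\<exists>l<t. l\<^sup>2 + \<beta> * l + \<gamma> = 0"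
proof -
  define D where "D = \<beta>\<^sup>2 - 4 * \<gamma>"
  have "(- (2 * t + \<beta>))\<^sup>2 < D"
    using assms unfolding D_def by (simp add: power2_eq_square algebra_simps)
  then have "- (2 * t + \<beta>) < sqrt D" and "0 \<le> D"
    using real_less_rsqrt zero_le_power2 order.strict_trans1 less_imp_le by blast+
  moreover have "((- \<beta> - sqrt D) / 2)\<^sup>2 + \<beta> * ((- \<beta> - sqrt D) / 2) + \<gamma> = 0"
    using \<open>0 \<le> D\<close> unfolding D_def by (simp add: power2_eq_square field_simps)
  ultimately show ?thesis
    by (intro exI[of _ "(- \<beta> - sqrt D) / 2"]) auto
qed

lemma diag_sqrt_square:
  fixes \<Sigma> :: "real^'n^'n"
  assumes "\<forall>i j. i \<noteq> j \<longrightarrow> \<Sigma> $ i $ j = 0" and "\<forall>i. \<Sigma> $ i $ i \<ge> 0"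
  defines "D \<equiv> (\<chi> i j. if i = j then sqrt (\<Sigma> $ i $ i) else 0) :: real^'n^'n"
  shows "D ** D = \<Sigma>" and "transpose D = D"
proof -
  have "(D ** D) $ i $ j = D $ i $ i * D $ i $ j" for i j
  proof -
    have "(D ** D) $ i $ j = (\<Sum>k\<in>UNIV. D $ i $ k * D $ k $ j)"
      by (simp add: matrix_matrix_mult_def)
    also have "\<dots> = (\<Sum>k\<in>UNIV. if k = i then D $ i $ i * D $ i $ j else 0)"
      by (rule sum.cong) (simp_all add: D_def)
    finally show ?thesis
      by simp
  qed
  then show "D ** D = \<Sigma>"
    using assms(1,2) by (simp add: vec_eq_iff D_def)
  show "transpose D = D"
    by (simp add: D_def vec_eq_iff transpose_def)
qed

lemma orthogonal_conj_symmetric_square: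
  fixes U D :: "real^'n^'n"
  assumes "orthogonal_matrix U" and "transpose D = D"
  defines "V \<equiv> U ** D ** transpose U"
  shows "transpose V = V" and "V ** V = U ** (D ** D) ** transpose U"
proof -
  show "transpose V = V"
    using assms by (simp add: V_def matrix_transpose_mul matrix_mul_assoc)
  have "V ** V = U ** D ** (transpose U ** U) ** D ** transpose U"
    by (simp add: V_def matrix_mul_assoc)
  also have "transpose U ** U = mat 1"
    using assms(1) by (simp add: orthogonal_matrix_def)
  finally show "V ** V = U ** (D ** D) ** transpose U"
    by (simp add: matrix_mul_assoc)
qed

lemma funpow_homogeneous_eigenvector:
  fixes f :: "'a::real_vector \<Rightarrow> 'a"
  assumes "\<And>c z. f (c *\<^sub>R z) = c *\<^sub>R f z" and "f v = l *\<^sub>R v"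
  shows "(f ^^ n) v = l ^ n *\<^sub>R v"
  by (induction n) (simp_all add: assms)

lemma norm_power_scaleR_at_top:
  fixes v :: "'a::real_normed_vector"
  assumes "1 < \<bar>l\<bar>" and "v \<noteq> 0"
  shows "filterlim (\<lambda>n. norm (l ^ n *\<^sub>R v)) at_top sequentially"
proof -
  have "filterlim (\<lambda>n. norm (l ^ n)) at_top sequentially"
    using assms(1) by (intro filterlim_at_infinity_imp_norm_at_top filterlim_realpow_sequentially_gt1) simp
  then have "filterlim (\<lambda>n. norm v * norm (l ^ n)) at_top sequentially"
    using assms(2) by (intro filterlim_tendsto_pos_mult_at_top[OF tendsto_const]) simp_all
  then show ?thesis
    by (simp add: mult.commute)
qed

definition laplacian2 :: "real^2^2" where
  "laplacian2 = (\<chi> i j. if i = j then 1 else -1)"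

definition antipodal :: "real^'m \<Rightarrow> real^'m^2" where
  "antipodal x = (\<chi> k. if k = 1 then x else - x)"

lemma half_Pmat_minus_combA_Pmat:
  "(1/2::real) *\<^sub>R (Pmat - combA a ** Pmat) = ((1 - a) / 4) *\<^sub>R laplacian2"
  by (simp add: vec_eq_iff forall_2 Pmat_def combA_def laplacian2_def matrix_matrix_mult_def
      mat_def sum_2 algebra_simps)

lemma symmetric_sqrt_laplacian2:
  fixes V :: "real^2^2"
  assumes "transpose V = V" and "V ** V = c *\<^sub>R laplacian2" and "c \<noteq> 0"
  shows "\<exists>p. V = p *\<^sub>R laplacian2 \<and> 2 * p\<^sup>2 = c"
proof -
  define p q r where "p = V $ 1 $ 1" and "q = V $ 1 $ 2" and "r = V $ 2 $ 2"
  have "V $ 2 $ 1 = q"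
    using arg_cong[OF assms(1), of "\<lambda>X. X $ 1 $ 2"] by (simp add: q_def transpose_def)
  then have V: "V = (\<chi> i j. if i = 1 then (if j = 1 then p else q) else (if j = 1 then q else r))"
    by (auto simp: vec_eq_iff forall_2 p_def q_def r_def)
  have eqs: "p\<^sup>2 + q\<^sup>2 = c" "r\<^sup>2 + q\<^sup>2 = c" "q * (p + r) = - c"
    using assms(2) unfolding V
    by (auto simp: vec_eq_iff forall_2 matrix_matrix_mult_def sum_2 laplacian2_def power2_eq_square
        algebra_simps)
  have "(p - r) * (p + r) = 0"
    using eqs(1,2) by (simp add: algebra_simps power2_eq_square)
  moreover have "p + r \<noteq> 0"
    using eqs(3) assms(3) by auto
  ultimately have "r = p"
    by simp
  with eqs have "(p + q)\<^sup>2 = 0"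
    by (simp add: algebra_simps power2_eq_square)
  then have "q = - p"
    by simp
  with \<open>r = p\<close> eqs(1) show ?thesis
    by (intro exI[of _ p]) (auto simp: V laplacian2_def vec_eq_iff forall_2)
qed

lemma kapp_scaleR: "kapp B (c *\<^sub>R X) = c *\<^sub>R kapp B X"
  by (simp add: kapp_def vec_eq_iff scaleR_sum_right mult_ac)

lemma kapp_matrix_mult: "kapp (A ** B) X = kapp A (kapp B X)"
  by (simp add: kapp_def vec_eq_iff sum_2 matrix_matrix_mult_def algebra_simps)

lemma kapp_antipodal:
  assumes "B $ 2 $ 2 - B $ 2 $ 1 = B $ 1 $ 1 - B $ 1 $ 2"
  shows "kapp B (antipodal x) = (B $ 1 $ 1 - B $ 1 $ 2) *\<^sub>R antipodal x"
  using assms by (simp add: kapp_def antipodal_def vec_eq_iff forall_2 sum_2 algebra_simps)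
    (metis distrib_left)

lemma kapp_laplacian2_antipodal:
  "kapp (c *\<^sub>R laplacian2) (antipodal x) = (2 * c) *\<^sub>R antipodal x"
  by (subst kapp_antipodal) (simp_all add: laplacian2_def)

lemma Qe_step_scaleR: "Qe_step a \<mu> \<sigma> V (c *\<^sub>R z) = c *\<^sub>R Qe_step a \<mu> \<sigma> V z"
  by (simp add: Qe_step_def Let_def kapp_scaleR scaleR_add_right)

lemma Qe_step_antipodal:
  fixes a \<mu> \<sigma> p \<alpha> \<beta> :: real and x :: "real^'m"
  assumes "V = p *\<^sub>R laplacian2"
  defines "m \<equiv> \<mu> * \<sigma>\<^sup>2" and "u \<equiv> antipodal x"
  shows "Qe_step a \<mu> \<sigma> V (\<alpha> *\<^sub>R u, \<beta> *\<^sub>R u) =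
    (((a - m) * \<alpha> - 4 * p * \<beta>) *\<^sub>R u, (2 * p * (a - m) * \<alpha> + a * \<beta>) *\<^sub>R u)"
proof -
  have B: "kapp (Abar a - m *\<^sub>R mat 1) u = (a - m) *\<^sub>R u"
    unfolding u_def
    by (subst kapp_antipodal) (simp_all add: Abar_def combA_def mat_def add_divide_distrib diff_divide_distrib)
  have A: "kapp (Abar a) u = a *\<^sub>R u"
    unfolding u_def
    by (subst kapp_antipodal) (simp_all add: Abar_def combA_def mat_def add_divide_distrib diff_divide_distrib)
  have V: "kapp V u = (2 * p) *\<^sub>R u" and V': "kapp ((-2::real) *\<^sub>R V) u = (- 4 * p) *\<^sub>R u"
    unfolding u_def assms(1) scaleR_scaleR kapp_laplacian2_antipodal by simp_all
  show ?thesis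
    unfolding Qe_step_def Let_def m_def[symmetric] fst_conv snd_conv kapp_scaleR kapp_matrix_mult
      A B V V'
    by (simp add: algebra_simps)
qed

lemma reduced_Qe_eigenvector:
  fixes a m p :: real
  assumes "0 < a" and "a < 1" and "8 * p\<^sup>2 = 1 - a" and "a + 1 \<le> m"
  obtains l b where "l < -1" and "(a - m) - 4 * p * b = l" and "2 * p * (a - m) + a * b = l * b"
proof -
  \<comment> \<open>(1, b) is an eigenvector of [a - m, -4p; 2p(a - m), a] for the eigenvalue l; the quadratic
    below is its characteristic polynomial\<close>
  have "(-1)\<^sup>2 + (m - 2 * a) * (-1) + (a - m) < 0"
    using assms by simp
  then obtain l where "l < -1" and char: "l\<^sup>2 + (m - 2 * a) * l + (a - m) = 0"
    using monic_quadratic_root_below by blast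
  define b where "b = 2 * p * (a - m) / (l - a)"
  have "l - a \<noteq> 0"
    using \<open>l < -1\<close> assms(1) by simp
  then have "2 * p * (a - m) + a * b = l * b"
    by (simp add: b_def field_simps)
  moreover have "(a - m) - 4 * p * b = l"
  proof -
    have "((a - m) - 4 * p * b - l) * (l - a) = (a - m) * (l - a) - 8 * p\<^sup>2 * (a - m) - l * (l - a)"
      using \<open>l - a \<noteq> 0\<close> by (simp add: b_def field_simps power2_eq_square)
    also have "\<dots> = - (l\<^sup>2 + (m - 2 * a) * l + (a - m))"
      unfolding assms(3) by (simp add: algebra_simps power2_eq_square)
    finally show ?thesis
      using char \<open>l - a \<noteq> 0\<close> by simp
  qed
  ultimately show ?thesis
    using that \<open>l < -1\<close> by blast
qed

lemma extra_err_antipodal_eigenvector: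
  fixes x :: "real^'m"
  assumes "V = p *\<^sub>R laplacian2"
    and "(a - \<mu> * \<sigma>^2) - 4 * p * b = l" and "2 * p * (a - \<mu> * \<sigma>^2) + a * b = l * b"
  defines "z0 \<equiv> (antipodal x, b *\<^sub>R antipodal x)"
  shows "extra_err a \<mu> \<sigma> V z0 n = l ^ n *\<^sub>R z0"
proof -
  have "Qe_step a \<mu> \<sigma> V z0 = (((a - \<mu> * \<sigma>^2) - 4 * p * b) *\<^sub>R antipodal x,
      (2 * p * (a - \<mu> * \<sigma>^2) + a * b) *\<^sub>R antipodal x)"
    using Qe_step_antipodal[OF assms(1), where a = a and \<mu> = \<mu> and \<sigma> = \<sigma> and \<alpha> = 1 and \<beta> = b]
    by (simp add: z0_def)
  also have "\<dots> = l *\<^sub>R z0"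
    unfolding assms(2,3) by (simp add: z0_def)
  finally show ?thesis
    unfolding extra_err_def by (rule funpow_homogeneous_eigenvector[OF Qe_step_scaleR])
qed

theorem lemma7:
  fixes a \<mu> \<sigma> :: real and U \<Sigma> V :: "real^2^2"
  assumes "0 < a" and "a < 1"
    and "orthogonal_matrix U"
    and "\<forall>i j. i \<noteq> j \<longrightarrow> \<Sigma> $ i $ j = 0"
    and "\<forall>i. \<Sigma> $ i $ i \<ge> 0"
    and "(1/2::real) *\<^sub>R (Pmat - combA a ** Pmat) = U ** \<Sigma> ** transpose U"
    and "V = U ** (\<chi> i j. if i = j then sqrt (\<Sigma> $ i $ i) else 0) ** transpose U"
    and "\<mu> * \<sigma>^2 \<ge> a + 1"
  shows "\<exists>z0 :: (real^'m^2) \<times> (real^'m^2). snd z0 \<in> range (kapp V) \<and>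
           filterlim (\<lambda>i. norm (extra_err a \<mu> \<sigma> V z0 i)) at_top sequentially"
proof -
  have "transpose V = V" and "V ** V = ((1 - a) / 4) *\<^sub>R laplacian2"
    using orthogonal_conj_symmetric_square[OF assms(3) diag_sqrt_square(2)[OF assms(4,5)]]
      diag_sqrt_square(1)[OF assms(4,5)] assms(6,7) half_Pmat_minus_combA_Pmat by simp_all
  moreover have "(1 - a) / 4 \<noteq> 0"
    using assms(2) by simp
  ultimately obtain p where V: "V = p *\<^sub>R laplacian2" and "2 * p\<^sup>2 = (1 - a) / 4"
    using symmetric_sqrt_laplacian2 by blast
  then have p: "8 * p\<^sup>2 = 1 - a"
    by simp
  obtain l b where "l < -1" and eig: "(a - \<mu> * \<sigma>^2) - 4 * p * b = l"
      "2 * p * (a - \<mu> * \<sigma>^2) + a * b = l * b"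
    using reduced_Qe_eigenvector[OF assms(1,2) p assms(8)] by blast
  define u :: "real^'m^2" where "u = antipodal 1"
  define z0 where "z0 = (u, b *\<^sub>R u)"
  have "fst z0 $ 1 = 1"
    by (simp add: z0_def u_def antipodal_def)
  then have "z0 \<noteq> 0"
    by auto
  moreover have "extra_err a \<mu> \<sigma> V z0 n = l ^ n *\<^sub>R z0" for n
    unfolding z0_def u_def by (rule extra_err_antipodal_eigenvector[OF V eig])
  ultimately have "filterlim (\<lambda>i. norm (extra_err a \<mu> \<sigma> V z0 i)) at_top sequentially"
    using norm_power_scaleR_at_top[of l z0] \<open>l < -1\<close> by simp
  moreover have "p \<noteq> 0"
    using p assms(2) by auto
  then have "snd z0 = kapp V ((b / (2 * p)) *\<^sub>R u)"
    by (simp add: z0_def u_def V kapp_scaleR kapp_laplacian2_antipodal)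
  ultimately show ?thesis
    by blast
qed

end
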